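(* Let $y\ge 1$ be an integer and $s\ge 0$ an integer. Consider the random walk on $\mathbb{Z}$ starting at $s$ whose steps are independent and equal to $+y$ or $-2$, each with probability $\tfrac12$, stopped at the first time it enters $\{0,1\}$ (if $s\in\{0,1\}$ it is stopped at time $0$). For $j\ge 0$ let $q_j(s)$ be the probability that the walk is eventually absorbed in $\{0,1\}$ having made exactly $j$ steps equal to $-2$, and let $F_s(z)=\sum_{j\ge 0}q_j(s)z^j$. Let $a=a(z)$ and $b=b(z)$ be the two roots of $x^{y+2}-2x^2+z=0$ that tend to $0$ as $z\to 0$ (the "small roots"). Then, for $z$ sufficiently small, $$F_s(z)=\frac{(1-b)\,a^s+(a-1)\,b^s}{a-b}.$$ In particular, for $s=2$ this equals $a+b-ab$.
   Context: For $|z|$ small and positive the polynomial $x^{y+2}-2x^2+z$ has exactly two roots of modulus tending to $0$ as $z\to0$ (both of order $\sqrt{z/2}$). The other $y$ roots stay bounded away from $0$. The right-hand side is symmetric in $a$ and $b$. *)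

theory Defs
  imports "HOL-Analysis.Analysis"
begin

text \<open>A path of the walk is a list of steps: True = step +y, False = step -2.\<close>

definition step_val :: "nat \<Rightarrow> bool \<Rightarrow> int" where
  "step_val y b = (if b then int y else -2)"

definition walk_pos :: "nat \<Rightarrow> nat \<Rightarrow> bool list \<Rightarrow> int" where
  "walk_pos y s xs = int s + sum_list (map (step_val y) xs)"

definition absorbing_path :: "nat \<Rightarrow> nat \<Rightarrow> bool list \<Rightarrow> bool" where
  "absorbing_path y s xs \<longleftrightarrow>
     walk_pos y s xs \<in> {0, 1} \<and>
     (\<forall>i < length xs. walk_pos y s (take i xs) \<notin> {0, 1})"

definition q_prob :: "nat \<Rightarrow> nat \<Rightarrow> nat \<Rightarrow> real" where
  "q_prob y j s = (\<Sum>xs \<in> {xs. absorbing_path y s xs \<and> count_list xs False = j}.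
                     (1/2::real) ^ length xs)"

definition F_gen :: "nat \<Rightarrow> nat \<Rightarrow> complex \<Rightarrow> complex" where
  "F_gen y s z = (\<Sum>j. complex_of_real (q_prob y j s) * z ^ j)"

end

theory Submission
  imports Defs
begin

text \<open>Fix a root \<open>r\<close> of \<open>x^(y+2) - 2x^2 + z\<close> and give a path with \<open>d\<close> down-steps
  that ends at position \<open>p\<close> the weight \<open>(1/2)^length * z^d * r^p\<close>. Since
  \<open>(r^y + z r^-2) / 2 = 1\<close>, one more step of the walk stopped in \<open>{0,1}\<close> preserves the
  total weight, which therefore stays \<open>r^s\<close>. For \<open>|r| \<le> 1\<close> and \<open>|z| < 1\<close> the paths not
  yet absorbed after \<open>n\<close> steps weigh at most \<open>((1 + |z|)/2)^n\<close>, so in the limit the absorbed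
  paths alone weigh \<open>r^s\<close>. These end at \<open>p \<in> {0,1}\<close>, where \<open>r^p = r + (1 - r) 0^p\<close>: the two
  small roots \<open>a \<noteq> b\<close> thus give two linear equations in \<open>F\<^sub>s\<close> (the weight at \<open>r = 1\<close>) and the
  generating function of absorption at 0 (the weight at \<open>r = 0\<close>), and eliminating the latter
  gives the formula. Because \<open>y \<ge> 1\<close>, an absorbed path with \<open>j\<close> down-steps has length at most
  \<open>3j + 1\<close>, so truncating by length yields the power series \<open>F\<^sub>s(z)\<close> in the limit.\<close>

definition walk_step :: "nat \<Rightarrow> nat \<Rightarrow> bool \<Rightarrow> nat" where
  "walk_step y s b = (if b then s + y else s - 2)"

definition absorbed_within :: "nat \<Rightarrow> nat \<Rightarrow> nat \<Rightarrow> bool list set" where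
  "absorbed_within y s n = {xs. absorbing_path y s xs \<and> length xs \<le> n}"

definition surviving :: "nat \<Rightarrow> nat \<Rightarrow> nat \<Rightarrow> bool list set" where
  "surviving y s n = {xs. length xs = n \<and> (\<forall>i\<le>n. walk_pos y s (take i xs) \<notin> {0, 1})}"

definition path_weight :: "'a::field \<Rightarrow> bool list \<Rightarrow> 'a" where
  "path_weight z xs = (1/2) ^ length xs * z ^ count_list xs False"

definition path_moment :: "nat \<Rightarrow> nat \<Rightarrow> 'a::field \<Rightarrow> 'a \<Rightarrow> bool list set \<Rightarrow> 'a" where
  "path_moment y s z r A = (\<Sum>xs\<in>A. path_weight z xs * r ^ nat (walk_pos y s xs))"

lemma path_weight_Nil [simp]: "path_weight z [] = 1"
  by (simp add: path_weight_def)

lemma path_weight_Cons: "path_weight z (b # xs) = (if b then 1 else z) / 2 * path_weight z xs"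
  by (simp add: path_weight_def)

lemma walk_pos_Nil [simp]: "walk_pos y s [] = int s"
  by (simp add: walk_pos_def)

lemma walk_pos_Cons: "2 \<le> s \<Longrightarrow> walk_pos y s (b # xs) = walk_pos y (walk_step y s b) xs"
  by (auto simp: walk_pos_def walk_step_def step_val_def of_nat_diff)

lemma walk_pos_take_Suc_Cons:
  "2 \<le> s \<Longrightarrow> walk_pos y s (take (Suc i) (b # xs)) = walk_pos y (walk_step y s b) (take i xs)"
  by (simp add: walk_pos_Cons)

lemma walk_pos_eq_counts:
  "walk_pos y s xs = int s + int y * int (count_list xs True) - 2 * int (count_list xs False)"
  by (induction xs) (auto simp: walk_pos_def step_val_def algebra_simps)

lemma absorbing_path_Cons:
  "2 \<le> s \<Longrightarrow> absorbing_path y s (b # xs) \<longleftrightarrow> absorbing_path y (walk_step y s b) xs"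
  unfolding absorbing_path_def
  by (simp only: length_Cons All_less_Suc2 walk_pos_take_Suc_Cons walk_pos_Cons) auto

lemma absorbing_path_start_absorbed:
  assumes "s < 2"
  shows "absorbing_path y s xs \<longleftrightarrow> xs = []"
proof -
  have "int s \<in> {0, 1}" using assms by auto
  then show ?thesis
    unfolding absorbing_path_def by (cases xs) (auto dest: spec[of _ 0])
qed

lemma absorbed_within_start_absorbed: "s < 2 \<Longrightarrow> absorbed_within y s n = {[]}"
  by (auto simp: absorbed_within_def absorbing_path_start_absorbed)

lemma surviving_start_absorbed: "s < 2 \<Longrightarrow> surviving y s n = {}"
  unfolding surviving_def by (auto dest: spec[of _ 0])

lemma absorbed_within_0: "2 \<le> s \<Longrightarrow> absorbed_within y s 0 = {}"
  unfolding absorbed_within_def absorbing_path_def by auto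

lemma surviving_0: "2 \<le> s \<Longrightarrow> surviving y s 0 = {[]}"
  unfolding surviving_def by auto

lemma Cons_in_absorbed_within_Suc:
  "2 \<le> s \<Longrightarrow> b # xs \<in> absorbed_within y s (Suc n) \<longleftrightarrow> xs \<in> absorbed_within y (walk_step y s b) n"
  unfolding absorbed_within_def by (simp add: absorbing_path_Cons)

lemma Cons_in_surviving_Suc:
  "2 \<le> s \<Longrightarrow> b # xs \<in> surviving y s (Suc n) \<longleftrightarrow> xs \<in> surviving y (walk_step y s b) n"
  unfolding surviving_def less_Suc_eq_le[symmetric]
  by (simp only: length_Cons All_less_Suc2 walk_pos_take_Suc_Cons mem_Collect_eq) auto

lemma finite_absorbed_within: "finite (absorbed_within y s n)"
  by (rule finite_subset[OF _ finite_lists_length_le[of UNIV n]]) (auto simp: absorbed_within_def)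

lemma finite_surviving: "finite (surviving y s n)"
  by (rule finite_subset[OF _ finite_lists_length_eq[of UNIV n]]) (auto simp: surviving_def)

lemma sum_bool_lists_by_head:
  assumes "[] \<notin> A" and "\<And>b xs. b # xs \<in> A \<longleftrightarrow> xs \<in> B b"
    and "finite (B True)" and "finite (B False)"
  shows "sum f A = (\<Sum>xs\<in>B True. f (True # xs)) + (\<Sum>xs\<in>B False. f (False # xs))"
proof -
  have A: "A = Cons True ` B True \<union> Cons False ` B False"
  proof (intro set_eqI iffI)
    fix xs assume "xs \<in> A"
    with assms(1) obtain c ys where "xs = c # ys" by (cases xs) auto
    with \<open>xs \<in> A\<close> assms(2) show "xs \<in> Cons True ` B True \<union> Cons False ` B False"
      by (cases c) auto
  qed (use assms(2) in auto)
  have "sum f A = sum f (Cons True ` B True) + sum f (Cons False ` B False)"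
    unfolding A by (rule sum.union_disjoint) (use assms(3,4) in auto)
  then show ?thesis
    by (simp add: sum.reindex)
qed

lemma path_moment_Cons_split:
  assumes "2 \<le> s" and "[] \<notin> A" and "\<And>b xs. b # xs \<in> A \<longleftrightarrow> xs \<in> B (walk_step y s b)"
    and "finite (B (s + y))" and "finite (B (s - 2))"
  shows "path_moment y s z r A =
           path_moment y (s + y) z r (B (s + y)) / 2 + z / 2 * path_moment y (s - 2) z r (B (s - 2))"
proof -
  have "path_moment y s z r A =
          (\<Sum>xs\<in>B (s + y). path_weight z (True # xs) * r ^ nat (walk_pos y s (True # xs))) +
          (\<Sum>xs\<in>B (s - 2). path_weight z (False # xs) * r ^ nat (walk_pos y s (False # xs)))"
    unfolding path_moment_def
    using sum_bool_lists_by_head[of A "\<lambda>b. B (walk_step y s b)"] assms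
    by (simp add: walk_step_def)
  then show ?thesis
    using assms(1)
    by (simp add: path_moment_def walk_pos_Cons path_weight_Cons walk_step_def
                  sum_distrib_left sum_divide_distrib mult.assoc)
qed

lemma path_moment_absorbed_within_Suc:
  assumes "2 \<le> s"
  shows "path_moment y s z r (absorbed_within y s (Suc n)) =
           path_moment y (s + y) z r (absorbed_within y (s + y) n) / 2 +
           z / 2 * path_moment y (s - 2) z r (absorbed_within y (s - 2) n)"
proof (rule path_moment_Cons_split[OF assms, where B = "\<lambda>t. absorbed_within y t n"])
  show "[] \<notin> absorbed_within y s (Suc n)"
    using assms by (simp add: absorbed_within_def absorbing_path_def)
qed (simp_all add: Cons_in_absorbed_within_Suc[OF assms] finite_absorbed_within)

lemma path_moment_surviving_Suc:
  assumes "2 \<le> s"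
  shows "path_moment y s z r (surviving y s (Suc n)) =
           path_moment y (s + y) z r (surviving y (s + y) n) / 2 +
           z / 2 * path_moment y (s - 2) z r (surviving y (s - 2) n)"
proof (rule path_moment_Cons_split[OF assms, where B = "\<lambda>t. surviving y t n"])
  show "[] \<notin> surviving y s (Suc n)"
    by (simp add: surviving_def)
qed (simp_all add: Cons_in_surviving_Suc[OF assms] finite_surviving)

lemma root_power_step:
  fixes r z :: "'a::field_char_0"
  assumes "r ^ (y + 2) - 2 * r ^ 2 + z = 0" and "2 \<le> s"
  shows "r ^ (s + y) / 2 + z / 2 * r ^ (s - 2) = r ^ s"
proof -
  obtain k where k: "s = k + 2" using assms(2) by (metis add.commute le_Suc_ex)
  have "r ^ (s + y) / 2 + z / 2 * r ^ (s - 2) = r ^ k * (r ^ (y + 2) + z) / 2"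
    unfolding k by (simp add: power_add algebra_simps add_divide_distrib)
  also have "r ^ (y + 2) + z = 2 * r ^ 2"
    using assms(1) by (simp add: algebra_simps)
  finally show ?thesis
    unfolding k by (simp add: power_add power2_eq_square)
qed

lemma absorbed_plus_surviving_moment:
  fixes r z :: "'a::field_char_0"
  assumes "r ^ (y + 2) - 2 * r ^ 2 + z = 0"
  shows "path_moment y s z r (absorbed_within y s n) + path_moment y s z r (surviving y s n) = r ^ s"
proof (induction n arbitrary: s)
  case 0
  then show ?case
    by (cases "s < 2")
       (simp_all add: absorbed_within_start_absorbed surviving_start_absorbed
                      absorbed_within_0 surviving_0 path_moment_def)
next
  case (Suc n)
  show ?case
  proof (cases "s < 2")
    case True
    then show ?thesis
      by (simp add: absorbed_within_start_absorbed surviving_start_absorbed path_moment_def)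
  next
    case False
    then have "2 \<le> s" by simp
    have "path_moment y s z r (absorbed_within y s (Suc n)) + path_moment y s z r (surviving y s (Suc n))
            = (path_moment y (s + y) z r (absorbed_within y (s + y) n)
                 + path_moment y (s + y) z r (surviving y (s + y) n)) / 2
              + z / 2 * (path_moment y (s - 2) z r (absorbed_within y (s - 2) n)
                 + path_moment y (s - 2) z r (surviving y (s - 2) n))"
      by (simp add: path_moment_absorbed_within_Suc[OF \<open>2 \<le> s\<close>]
                    path_moment_surviving_Suc[OF \<open>2 \<le> s\<close>] algebra_simps add_divide_distrib)
    also have "\<dots> = r ^ (s + y) / 2 + z / 2 * r ^ (s - 2)"
      by (simp only: Suc.IH)
    also have "\<dots> = r ^ s" by (rule root_power_step[OF assms \<open>2 \<le> s\<close>])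
    finally show ?thesis .
  qed
qed

lemma norm_surviving_moment_le:
  fixes r z :: complex
  assumes "norm r \<le> 1"
  shows "norm (path_moment y s z r (surviving y s n)) \<le> ((1 + norm z) / 2) ^ n"
proof (induction n arbitrary: s)
  case 0
  then show ?case
    using assms
    by (cases "s < 2") (simp_all add: surviving_start_absorbed surviving_0 path_moment_def
                                      norm_power power_le_one)
next
  case (Suc n)
  show ?case
  proof (cases "s < 2")
    case True
    then show ?thesis by (simp add: surviving_start_absorbed path_moment_def)
  next
    case False
    then have "norm (path_moment y s z r (surviving y s (Suc n)))
                 \<le> ((1 + norm z) / 2) ^ n / 2 + norm z / 2 * ((1 + norm z) / 2) ^ n"
      using Suc.IH[of "s + y"] Suc.IH[of "s - 2"]
      by (auto simp: path_moment_surviving_Suc norm_mult norm_divide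
               intro!: order_trans[OF norm_triangle_ineq] add_mono mult_left_mono)
    also have "\<dots> = ((1 + norm z) / 2) ^ Suc n" by (simp add: field_simps)
    finally show ?thesis .
  qed
qed

lemma absorbed_within_probability_le_1:
  "(\<Sum>xs\<in>absorbed_within y s n. (1/2::real) ^ length xs) \<le> 1"
proof -
  have "path_moment y s 1 1 (absorbed_within y s n) + path_moment y s 1 (1::real) (surviving y s n) = 1"
    using absorbed_plus_surviving_moment[of 1 y 1 s n] by simp
  moreover have "path_moment y s 1 (1::real) (surviving y s n) \<ge> 0"
    by (simp add: path_moment_def path_weight_def sum_nonneg)
  ultimately show ?thesis by (simp add: path_moment_def path_weight_def)
qed

lemma length_le_of_absorbing_path:
  assumes "y \<ge> 1" and "absorbing_path y s xs"
  shows "length xs \<le> 3 * count_list xs False + 1"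
proof -
  have "int s + int y * int (count_list xs True) - 2 * int (count_list xs False) \<le> 1"
    using assms(2) walk_pos_eq_counts[of y s xs] unfolding absorbing_path_def by auto
  moreover have "int (count_list xs True) \<le> int y * int (count_list xs True)"
    using assms(1) by (simp add: mult_le_cancel_right1 del: of_nat_mult)
  moreover have "length xs = count_list xs True + count_list xs False"
    by (induction xs) auto
  ultimately show ?thesis by linarith
qed

lemma absorbing_paths_subset_absorbed_within:
  assumes "y \<ge> 1"
  shows "{xs. absorbing_path y s xs \<and> count_list xs False \<le> m} \<subseteq> absorbed_within y s (3 * m + 1)"
  using length_le_of_absorbing_path[OF assms] by (fastforce simp: absorbed_within_def)

lemma path_moment_absorbed_within_interpolate:
  "path_moment y s z r (absorbed_within y s n) =
     r * path_moment y s z 1 (absorbed_within y s n) + (1 - r) * path_moment y s z 0 (absorbed_within y s n)"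
proof -
  have "path_weight z xs * r ^ nat (walk_pos y s xs) =
          r * (path_weight z xs * 1 ^ nat (walk_pos y s xs)) +
          (1 - r) * (path_weight z xs * 0 ^ nat (walk_pos y s xs))"
    if "xs \<in> absorbed_within y s n" for xs
    using that by (auto simp: absorbed_within_def absorbing_path_def algebra_simps)
  then show ?thesis
    unfolding path_moment_def by (simp add: sum.distrib sum_distrib_left cong: sum.cong)
qed

lemma absorbed_moment_two_roots:
  fixes a b z :: "'a::field_char_0"
  assumes "a ^ (y + 2) - 2 * a ^ 2 + z = 0" and "b ^ (y + 2) - 2 * b ^ 2 + z = 0" and "a \<noteq> b"
  shows "path_moment y s z 1 (absorbed_within y s n) =
           ((1 - b) * (a ^ s - path_moment y s z a (surviving y s n)) +
            (a - 1) * (b ^ s - path_moment y s z b (surviving y s n))) / (a - b)"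
proof -
  define P where "P c = path_moment y s z c (absorbed_within y s n)" for c
  have "a ^ s - path_moment y s z a (surviving y s n) = a * P 1 + (1 - a) * P 0"
    using absorbed_plus_surviving_moment[OF assms(1), of s n]
      path_moment_absorbed_within_interpolate[of y s z a n]
    unfolding P_def by (metis add_diff_cancel_right')
  moreover have "b ^ s - path_moment y s z b (surviving y s n) = b * P 1 + (1 - b) * P 0"
    using absorbed_plus_surviving_moment[OF assms(2), of s n]
      path_moment_absorbed_within_interpolate[of y s z b n]
    unfolding P_def by (metis add_diff_cancel_right')
  moreover have "(1 - b) * (a * P 1 + (1 - a) * P 0) + (a - 1) * (b * P 1 + (1 - b) * P 0) = (a - b) * P 1"
    by algebra
  ultimately show ?thesis
    using assms(3) unfolding P_def by (simp add: eq_divide_eq mult.commute)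
qed

lemma absorbed_moment_tendsto:
  fixes a b z :: complex
  assumes "a ^ (y + 2) - 2 * a ^ 2 + z = 0" and "b ^ (y + 2) - 2 * b ^ 2 + z = 0" and "a \<noteq> b"
    and "norm a \<le> 1" and "norm b \<le> 1" and "norm z < 1"
  shows "(\<lambda>n. path_moment y s z 1 (absorbed_within y s n))
           \<longlonglongrightarrow> ((1 - b) * a ^ s + (a - 1) * b ^ s) / (a - b)"
proof -
  have surviving_to_0: "(\<lambda>n. path_moment y s z r (surviving y s n)) \<longlonglongrightarrow> 0" if "norm r \<le> 1" for r
    by (rule Lim_null_comparison[OF _ LIMSEQ_power_zero[of "(1 + norm z) / 2"]])
       (use norm_surviving_moment_le[OF that] assms(6) in auto)
  have "(\<lambda>n. ((1 - b) * (a ^ s - path_moment y s z a (surviving y s n)) +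
               (a - 1) * (b ^ s - path_moment y s z b (surviving y s n))) / (a - b))
          \<longlonglongrightarrow> ((1 - b) * (a ^ s - 0) + (a - 1) * (b ^ s - 0)) / (a - b)"
    using assms(3-5) by (intro tendsto_intros surviving_to_0) auto
  then show ?thesis
    by (simp add: absorbed_moment_two_roots[OF assms(1-3)])
qed

lemma q_prob_partial_sum:
  fixes z :: complex
  assumes "y \<ge> 1"
  shows "(\<Sum>j<m. complex_of_real (q_prob y j s) * z ^ j) =
           (\<Sum>xs\<in>{xs. absorbing_path y s xs \<and> count_list xs False < m}. path_weight z xs)"
    (is "_ = sum _ ?D")
proof -
  have "finite ?D"
    by (rule finite_subset[OF _ finite_absorbed_within])
       (use absorbing_paths_subset_absorbed_within[OF assms, of s m] in auto)
  have "complex_of_real (q_prob y j s) * z ^ j = (\<Sum>xs\<in>{xs \<in> ?D. count_list xs False = j}. path_weight z xs)"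
    if "j < m" for j
    using that unfolding q_prob_def
    by (auto simp: path_weight_def sum_distrib_right intro!: sum.cong)
  then have "(\<Sum>j<m. complex_of_real (q_prob y j s) * z ^ j) =
               (\<Sum>j<m. \<Sum>xs\<in>{xs \<in> ?D. count_list xs False = j}. path_weight z xs)"
    by simp
  also have "\<dots> = sum (path_weight z) ?D"
    by (rule sum.group) (use \<open>finite ?D\<close> in auto)
  finally show ?thesis .
qed

lemma norm_absorbed_moment_minus_q_prob_partial_sum_le:
  fixes z :: complex
  assumes "y \<ge> 1" and "norm z \<le> 1"
  shows "norm (path_moment y s z 1 (absorbed_within y s (3 * m + 1)) -
               (\<Sum>j<m. complex_of_real (q_prob y j s) * z ^ j)) \<le> norm z ^ m"
proof -
  let ?T = "absorbed_within y s (3 * m + 1)"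
  let ?D = "{xs. absorbing_path y s xs \<and> count_list xs False < m}"
  have "?D \<subseteq> ?T"
    using absorbing_paths_subset_absorbed_within[OF assms(1), of s m] by auto
  then have "path_moment y s z 1 ?T - (\<Sum>j<m. complex_of_real (q_prob y j s) * z ^ j) =
               (\<Sum>xs\<in>?T - ?D. path_weight z xs)"
    by (simp add: path_moment_def q_prob_partial_sum[OF assms(1)] sum.subset_diff[OF _ finite_absorbed_within])
  also have "norm \<dots> \<le> (\<Sum>xs\<in>?T - ?D. norm (path_weight z xs))"
    by (rule norm_sum)
  also have "\<dots> \<le> (\<Sum>xs\<in>?T - ?D. (1/2) ^ length xs * norm z ^ m)"
  proof (rule sum_mono)
    fix xs assume "xs \<in> ?T - ?D"
    then have "norm z ^ count_list xs False \<le> norm z ^ m"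
      using assms(2) by (intro power_decreasing) (auto simp: absorbed_within_def)
    then show "norm (path_weight z xs) \<le> (1/2) ^ length xs * norm z ^ m"
      by (simp add: path_weight_def norm_mult norm_power norm_divide)
  qed
  also have "\<dots> \<le> (\<Sum>xs\<in>?T. (1/2) ^ length xs * norm z ^ m)"
    by (rule sum_mono2[OF finite_absorbed_within]) auto
  also have "\<dots> = (\<Sum>xs\<in>?T. (1/2::real) ^ length xs) * norm z ^ m"
    by (simp add: sum_distrib_right)
  also have "\<dots> \<le> 1 * norm z ^ m"
    by (rule mult_right_mono[OF absorbed_within_probability_le_1]) simp
  finally show ?thesis by simp
qed

lemma F_gen_eq_lim_absorbed_moment:
  assumes "y \<ge> 1" and "norm z < 1"
    and "(\<lambda>n. path_moment y s z 1 (absorbed_within y s n)) \<longlonglongrightarrow> L"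
  shows "F_gen y s z = L"
proof -
  have "(\<lambda>m. path_moment y s z 1 (absorbed_within y s (3 * m + 1))) \<longlonglongrightarrow> L"
    using LIMSEQ_subseq_LIMSEQ[OF assms(3), of "\<lambda>m. 3 * m + 1"] by (simp add: strict_mono_def o_def)
  moreover have "(\<lambda>m. path_moment y s z 1 (absorbed_within y s (3 * m + 1)) -
                       (\<Sum>j<m. complex_of_real (q_prob y j s) * z ^ j)) \<longlonglongrightarrow> 0"
    by (rule Lim_null_comparison[OF _ LIMSEQ_power_zero[of "norm z"]])
       (use norm_absorbed_moment_minus_q_prob_partial_sum_le[OF assms(1)] assms(2) in auto)
  ultimately have "(\<lambda>m. path_moment y s z 1 (absorbed_within y s (3 * m + 1)) -
                       (path_moment y s z 1 (absorbed_within y s (3 * m + 1)) -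
                        (\<Sum>j<m. complex_of_real (q_prob y j s) * z ^ j))) \<longlonglongrightarrow> L - 0"
    by (rule tendsto_diff)
  then have "(\<lambda>m. \<Sum>j<m. complex_of_real (q_prob y j s) * z ^ j) \<longlonglongrightarrow> L"
    by simp
  then show ?thesis
    unfolding F_gen_def sums_def[symmetric] by (simp add: sums_unique[symmetric])
qed

theorem mainTheorem3:
  fixes y s :: nat and a b :: "complex \<Rightarrow> complex"
  assumes "y \<ge> 1"
    and roots: "\<forall>\<^sub>F z in at 0. a z ^ (y + 2) - 2 * a z ^ 2 + z = 0 \<and>
                               b z ^ (y + 2) - 2 * b z ^ 2 + z = 0 \<and> a z \<noteq> b z"
    and "(a \<longlongrightarrow> 0) (at 0)" and "(b \<longlongrightarrow> 0) (at 0)"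
  shows "(\<forall>\<^sub>F z in at 0. F_gen y s z = ((1 - b z) * a z ^ s + (a z - 1) * b z ^ s) / (a z - b z))
       \<and> (\<forall>\<^sub>F z in at 0. F_gen y 2 z = a z + b z - a z * b z)"
proof -
  have small: "\<forall>\<^sub>F z in at 0. norm (f z) < 1" if "(f \<longlongrightarrow> 0) (at 0)" for f :: "complex \<Rightarrow> complex"
    using order_tendstoD(2)[OF tendsto_norm_zero[OF that]] by simp
  have formula: "\<forall>\<^sub>F z in at 0. a z \<noteq> b z \<and>
                   F_gen y t z = ((1 - b z) * a z ^ t + (a z - 1) * b z ^ t) / (a z - b z)" for t
    using roots small[OF assms(3)] small[OF assms(4)] small[OF tendsto_ident_at]
  proof eventually_elim
    case (elim z)
    then show ?case
      using F_gen_eq_lim_absorbed_moment[OF assms(1)] absorbed_moment_tendsto[of "a z" y z "b z" t]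
      by simp
  qed
  have "\<forall>\<^sub>F z in at 0. F_gen y 2 z = a z + b z - a z * b z"
    using formula[of 2]
    by eventually_elim (simp add: field_simps power2_eq_square)
  with formula[of s] show ?thesis
    by (auto elim: eventually_mono)
qed

end
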